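(* Assume the standing assumptions (A). Let $\mathcal D=(X_{\mathcal D,0},\Pi_{\mathcal D},\nabla_{\mathcal D},Q_{\mathcal D})$ be a Gradient Discretisation with piecewise constant reconstruction, and let $u\in X_{\mathcal D,0}$ be a solution to the Gradient Scheme (GS). Then \[ \|\Pi_{\mathcal D} u\|_{L^2(\Omega)}+\|\Pi_{\mathcal D}\beta(u)\|_{L^2(\Omega)}+\|\nabla_{\mathcal D}\zeta(u)\|_{L^2(\Omega)^d}\le C\left(\|Q_{\mathcal D} f\|_{L^2(\Omega)}+\|F\|_{L^2(\Omega)^d}+1\right), \] where $C>0$ depends only on the data in (A) (i.e. $M_0,M_1,K_0,K_1,\underline\lambda,\overline\lambda$) and on an upper bound of $C_{\mathcal D}$.
   Context: Standing assumptions (A): $\Omega$ is an open bounded connected subset of $\mathbb{R}^d$; $\zeta:\mathbb{R}\to\mathbb{R}$ is continuous, non-decreasing, $\zeta(0)=0$ and there are $M_0,M_1>0$ with $|\zeta(s)|\ge M_0|s|-M_1$ for all $s$; $\beta:\mathbb{R}\to\mathbb{R}$ is continuous, non-decreasing, $\beta(0)=0$ and there are $K_0,K_1>0$ with $|\beta(s)|\le K_0|s|+K_1$ for all $s$; $\beta+\zeta$ is strictly increasing; $\Lambda:\Omega\to M_d(\mathbb{R})$ is measurable and there are $\overline\lambda\ge\underline\lambda>0$ such that for a.e. $x$, $\Lambda(x)$ is symmetric with eigenvalues in $[\underline\lambda,\overline\lambda]$; $f\in L^2(\Omega)$, $F\in L^2(\Omega)^d$. Gradient Discretisation (GD): $\mathcal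 D=(X_{\mathcal D,0},\Pi_{\mathcal D},\nabla_{\mathcal D},Q_{\mathcal D})$ where $X_{\mathcal D,0}$ is a finite-dimensional space, $\Pi_{\mathcal D}:X_{\mathcal D,0}\to L^2(\Omega)$ and $\nabla_{\mathcal D}:X_{\mathcal D,0}\to L^2(\Omega)^d$ are linear with $\|v\|_{\mathcal D}:=\|\nabla_{\mathcal D}v\|_{L^2}$ a norm on $X_{\mathcal D,0}$, and $Q_{\mathcal D}:L^2(\Omega)\to L^2(\Omega)$ is a (not necessarily linear or bounded) map called the quadrature operator. Piecewise constant reconstruction: there are finite sets $I_{\partial\Omega}\subset I$ with $X_{\mathcal D,0}=\{v=(v_i)_{i\in I}: v_i\in\mathbb{R},\ v_i=0\ \forall i\in I_{\partial\Omega}\}$ and a partition $(U_i)_{i\in I}$ of $\Omega$ (some $U_i$ possibly empty) with $\Pi_{\mathcal D}v=\sum_{i\in I}v_i\mathbf 1_{U_i}$. For $g:\mathbb{R}\to\mathbb{R}$ with $g(0)=0$, $g(v):=(g(v_i))_{i\in I}\in X_{\mathcal D,0}$ (so $\Pi_{\mathcal D}g(v)=g(\Pi_{\mathcal D}v)$). Gradient Scheme (GS): find $u\in X_{\mathcal D,0}$ such that for all $v\in X_{\mathcal D,0}$, $\int_\Omega\beta(\Pi_{\mathcal D}u)\Pi_{\mathcal D}v+\int_\Omega\Lambda\nabla_{\mathcal D}\zeta(u)\cdot\nabla_{\mathcal D}v=\int_\Omega Q_{\mathcal D}f\,\Pi_{\mathcal D}v-\int_\Omega F\cdot\nabla_{\mathcal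 D}v$. $C_{\mathcal D}:=\max_{v\in X_{\mathcal D,0}\setminus\{0\}}\|\Pi_{\mathcal D}v\|_{L^2}/\|\nabla_{\mathcal D}v\|_{L^2}$. *)

theory Defs
  imports "HOL-Analysis.Analysis"
begin

definition L2 :: "('a::euclidean_space) set \<Rightarrow> ('a \<Rightarrow> 'b::{real_normed_vector, second_countable_topology}) \<Rightarrow> bool" where
  "L2 \<Omega> g \<longleftrightarrow> g \<in> borel_measurable (lebesgue_on \<Omega>)
      \<and> integrable (lebesgue_on \<Omega>) (\<lambda>x. (norm (g x))\<^sup>2)"

definition L2norm :: "('a::euclidean_space) set \<Rightarrow> ('a \<Rightarrow> 'b::real_normed_vector) \<Rightarrow> real" where
  "L2norm \<Omega> g = sqrt (integral\<^sup>L (lebesgue_on \<Omega>) (\<lambda>x. (norm (g x))\<^sup>2))"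

text \<open>The discrete space X_{D,0}: families indexed by the finite set I (a set of naturals),
  vanishing on the boundary indices Ib (and, by convention, outside I).\<close>

definition XD :: "nat set \<Rightarrow> nat set \<Rightarrow> (nat \<Rightarrow> real) set" where
  "XD I Ib = {v. \<forall>i. (i \<notin> I \<or> i \<in> Ib) \<longrightarrow> v i = 0}"

definition PiD :: "nat set \<Rightarrow> (nat \<Rightarrow> 'a set) \<Rightarrow> (nat \<Rightarrow> real) \<Rightarrow> 'a \<Rightarrow> real" where
  "PiD I U v x = (\<Sum>i\<in>I. v i * indicator (U i) x)"

definition is_GD_pc ::
  "('a::euclidean_space) set \<Rightarrow> nat set \<Rightarrow> nat set \<Rightarrow> (nat \<Rightarrow> 'a set)
    \<Rightarrow> ((nat \<Rightarrow> real) \<Rightarrow> 'a \<Rightarrow> 'b::euclidean_space) \<Rightarrow> (('a \<Rightarrow> real) \<Rightarrow> ('a \<Rightarrow> real)) \<Rightarrow> bool" where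
  "is_GD_pc \<Omega> I Ib U Grad Q \<longleftrightarrow>
     finite I \<and> Ib \<subseteq> I
   \<and> (\<forall>i\<in>I. U i \<in> sets lebesgue \<and> U i \<subseteq> \<Omega>)
   \<and> disjoint_family_on U I \<and> (\<Union>i\<in>I. U i) = \<Omega>
   \<and> (\<forall>v\<in>XD I Ib. L2 \<Omega> (Grad v))
   \<and> (\<forall>v\<in>XD I Ib. \<forall>w\<in>XD I Ib. \<forall>a b::real.
        AE x in lebesgue_on \<Omega>. Grad (\<lambda>i. a * v i + b * w i) x = a *\<^sub>R Grad v x + b *\<^sub>R Grad w x)
   \<and> (\<forall>v\<in>XD I Ib. L2norm \<Omega> (Grad v) = 0 \<longrightarrow> (\<forall>i. v i = 0))
   \<and> (\<forall>g. L2 \<Omega> g \<longrightarrow> L2 \<Omega> (Q g))"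

definition CD :: "('a::euclidean_space) set \<Rightarrow> nat set \<Rightarrow> nat set \<Rightarrow> (nat \<Rightarrow> 'a set)
    \<Rightarrow> ((nat \<Rightarrow> real) \<Rightarrow> 'a \<Rightarrow> 'b::euclidean_space) \<Rightarrow> real" where
  "CD \<Omega> I Ib U Grad =
     Sup {L2norm \<Omega> (PiD I U v) / L2norm \<Omega> (Grad v) | v. v \<in> XD I Ib \<and> v \<noteq> (\<lambda>_. 0)}"

definition solves_GS ::
  "('a::euclidean_space) set \<Rightarrow> nat set \<Rightarrow> nat set \<Rightarrow> (nat \<Rightarrow> 'a set)
    \<Rightarrow> ((nat \<Rightarrow> real) \<Rightarrow> 'a \<Rightarrow> real^'n) \<Rightarrow> (('a \<Rightarrow> real) \<Rightarrow> ('a \<Rightarrow> real))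
    \<Rightarrow> (real \<Rightarrow> real) \<Rightarrow> (real \<Rightarrow> real) \<Rightarrow> ('a \<Rightarrow> real^'n^'n)
    \<Rightarrow> ('a \<Rightarrow> real) \<Rightarrow> ('a \<Rightarrow> real^'n) \<Rightarrow> (nat \<Rightarrow> real) \<Rightarrow> bool" where
  "solves_GS \<Omega> I Ib U Grad Q \<beta> \<zeta> \<Lambda> f F u \<longleftrightarrow>
     u \<in> XD I Ib \<and>
     (\<forall>v\<in>XD I Ib.
        (\<integral>x. \<beta> (PiD I U u x) * PiD I U v x \<partial>lebesgue_on \<Omega>)
      + (\<integral>x. (\<Lambda> x *v Grad (\<zeta> \<circ> u) x) \<bullet> Grad v x \<partial>lebesgue_on \<Omega>)
      = (\<integral>x. Q f x * PiD I U v x \<partial>lebesgue_on \<Omega>)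
      - (\<integral>x. F x \<bullet> Grad v x \<partial>lebesgue_on \<Omega>))"

end

theory Submission
  imports Defs
begin

text \<open>Test the scheme with v = \<zeta>(u). Since \<beta> and \<zeta> are non-decreasing and vanish at 0,
  the reaction term \<beta>(\<Pi>u) \<Pi>\<zeta>(u) is non-negative; the coercivity of \<Lambda>, Young's inequality
  and the discrete Poincare inequality \<parallel>\<Pi>v\<parallel> \<le> C_D \<parallel>\<nabla>v\<parallel> then bound \<parallel>\<nabla>\<zeta>(u)\<parallel> by the
  data. As the reconstruction is piecewise constant, \<Pi>\<zeta>(u) = \<zeta>(\<Pi>u) and \<Pi>\<beta>(u) = \<beta>(\<Pi>u)
  pointwise, so the growth conditions on \<zeta> and \<beta> transfer this bound to \<Pi>u and \<Pi>\<beta>(u).\<close>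

section \<open>Symmetric matrices\<close>

lemma linear_coeff_eq_0_if_quadratic_nonneg:
  fixes w c :: real
  assumes nonneg: "\<And>t. 0 \<le> 2 * t * w + t\<^sup>2 * c" and "c \<ge> 0"
  shows "w = 0"
proof -
  define t where "t = - w / (c + 1)"
  have t: "t * (c + 1) = - w" unfolding t_def using \<open>c \<ge> 0\<close> by simp
  have "(c + 1)\<^sup>2 * (2 * t * w + t\<^sup>2 * c) = 2 * (t * (c + 1)) * w * (c + 1) + (t * (c + 1))\<^sup>2 * c"
    by (simp add: power2_eq_square algebra_simps)
  also have "\<dots> = - (w\<^sup>2 * (c + 2))" unfolding t by (simp add: power2_eq_square algebra_simps)
  finally have "w\<^sup>2 * (c + 2) \<le> 0" using nonneg[of t] by (metis neg_0_le_iff_le zero_le_mult_iff zero_le_power2)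
  then show ?thesis using \<open>c \<ge> 0\<close> by (simp add: mult_le_0_iff)
qed

lemma symmetric_matrix_inner_commute:
  fixes A :: "real^'n^'n"
  assumes "transpose A = A"
  shows "x \<bullet> (A *v y) = y \<bullet> (A *v x)"
  by (metis assms dot_lmul_matrix inner_commute transpose_matrix_vector)

lemma matrix_vector_mult_uminus_left: "(- A) *v x = - (A *v x)"
  for A :: "real^'n^'m"
  by (simp add: matrix_vector_mult_def vec_eq_iff sum_negf)

lemma symmetric_matrix_minimiser_is_eigenvector:
  fixes A :: "real^'n^'n"
  assumes sym: "transpose A = A" and "x0 \<bullet> x0 = 1"
    and lower: "\<And>y. (x0 \<bullet> (A *v x0)) * (norm y)\<^sup>2 \<le> y \<bullet> (A *v y)"
  shows "A *v x0 = (x0 \<bullet> (A *v x0)) *\<^sub>R x0"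
proof -
  define m where "m = x0 \<bullet> (A *v x0)"
  txt \<open>The first variation of the Rayleigh quotient at x0 in the direction of the residual z
    vanishes.\<close>
  define z where "z = A *v x0 - m *\<^sub>R x0"
  define c where "c = z \<bullet> (A *v z) - m * (norm z)\<^sup>2"
  have "0 \<le> 2 * t * (norm z)\<^sup>2 + t\<^sup>2 * c" for t
  proof -
    have "(norm (x0 + t *\<^sub>R z))\<^sup>2 = 1 + 2 * t * (x0 \<bullet> z) + t\<^sup>2 * (norm z)\<^sup>2"
      using \<open>x0 \<bullet> x0 = 1\<close> by (simp only: power2_norm_eq_inner)
        (simp add: inner_add_left inner_add_right inner_commute power2_eq_square algebra_simps)
    moreover have "(x0 + t *\<^sub>R z) \<bullet> (A *v (x0 + t *\<^sub>R z))
        = m + 2 * t * (z \<bullet> (A *v x0)) + t\<^sup>2 * (z \<bullet> (A *v z))"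
      using symmetric_matrix_inner_commute[OF sym, of x0 z]
      by (simp add: matrix_vector_right_distrib matrix_vector_mult_scaleR inner_add_left
          inner_add_right m_def power2_eq_square algebra_simps)
    moreover have "z \<bullet> (A *v x0) = (norm z)\<^sup>2 + m * (x0 \<bullet> z)"
      unfolding z_def by (simp add: power2_norm_eq_inner inner_diff_left inner_diff_right
          inner_commute algebra_simps)
    ultimately show ?thesis
      using lower[of "x0 + t *\<^sub>R z"] unfolding c_def m_def by (simp add: algebra_simps)
  qed
  then have "(norm z)\<^sup>2 = 0"
    using lower[of z] unfolding m_def[symmetric]
    by (intro linear_coeff_eq_0_if_quadratic_nonneg[where c = c]) (auto simp: c_def)
  then show ?thesis unfolding z_def m_def by simp
qed

lemma symmetric_matrix_min_eigenvector:
  fixes A :: "real^'n^'n"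
  assumes sym: "transpose A = A"
  obtains x0 m where "norm x0 = 1" "A *v x0 = m *\<^sub>R x0" "\<And>y. m * (norm y)\<^sup>2 \<le> y \<bullet> (A *v y)"
proof -
  have "axis undefined 1 \<in> sphere (0::real^'n) 1" by simp
  then have ne: "sphere (0::real^'n) 1 \<noteq> {}" by blast
  have "continuous_on (sphere 0 1) (\<lambda>y::real^'n. y \<bullet> (A *v y))"
    using matrix_vector_mul_bounded_linear[of A]
    by (intro continuous_intros linear_continuous_on)
  then obtain x0 where x0: "x0 \<in> sphere 0 1"
    and min: "\<And>y. y \<in> sphere 0 1 \<Longrightarrow> x0 \<bullet> (A *v x0) \<le> y \<bullet> (A *v y)"
    using continuous_attains_inf[OF compact_sphere ne] by blast
  define m where "m = x0 \<bullet> (A *v x0)"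
  have "norm x0 = 1" and "x0 \<bullet> x0 = 1" using x0 by (simp_all add: dot_square_norm)
  have lower: "m * (norm y)\<^sup>2 \<le> y \<bullet> (A *v y)" for y
  proof (cases "y = 0")
    case False
    have "m \<le> (y /\<^sub>R norm y) \<bullet> (A *v (y /\<^sub>R norm y))"
      unfolding m_def using False by (intro min) simp
    also have "\<dots> = (y \<bullet> (A *v y)) / (norm y)\<^sup>2"
      using False by (simp add: matrix_vector_mult_scaleR power2_eq_square field_simps)
    finally show ?thesis using False by (simp add: field_simps)
  qed simp
  have "A *v x0 = m *\<^sub>R x0"
    using symmetric_matrix_minimiser_is_eigenvector[OF sym \<open>x0 \<bullet> x0 = 1\<close>] lower
    unfolding m_def by blast
  then show thesis using that \<open>norm x0 = 1\<close> lower by blast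
qed

lemma symmetric_matrix_quadratic_form_bounds:
  fixes A :: "real^'n^'n"
  assumes sym: "transpose A = A"
    and eigenvalues: "\<forall>c. (\<exists>v. v \<noteq> 0 \<and> A *v v = c *\<^sub>R v) \<longrightarrow> lo \<le> c \<and> c \<le> hi"
  shows "lo * (norm y)\<^sup>2 \<le> y \<bullet> (A *v y)" and "y \<bullet> (A *v y) \<le> hi * (norm y)\<^sup>2"
proof -
  obtain x0 m where "norm x0 = 1" "A *v x0 = m *\<^sub>R x0"
    and min: "\<And>y. m * (norm y)\<^sup>2 \<le> y \<bullet> (A *v y)"
    using symmetric_matrix_min_eigenvector[OF sym] by blast
  then have "lo \<le> m" using eigenvalues by (metis norm_zero zero_neq_one)
  then have "lo * (norm y)\<^sup>2 \<le> m * (norm y)\<^sup>2" by (rule mult_right_mono) simp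
  then show "lo * (norm y)\<^sup>2 \<le> y \<bullet> (A *v y)" using min[of y] by linarith
next
  have "transpose (- A) = - A" using sym by (simp add: transpose_def vec_eq_iff)
  then obtain x0 m where "norm x0 = 1" "(- A) *v x0 = m *\<^sub>R x0"
    and min: "\<And>y. m * (norm y)\<^sup>2 \<le> y \<bullet> ((- A) *v y)"
    using symmetric_matrix_min_eigenvector by blast
  then have "A *v x0 = (- m) *\<^sub>R x0"
    by (metis matrix_vector_mult_uminus_left minus_minus scaleR_minus_left)
  then have "- m \<le> hi" using eigenvalues \<open>norm x0 = 1\<close> by (metis norm_zero zero_neq_one)
  then have "(- m) * (norm y)\<^sup>2 \<le> hi * (norm y)\<^sup>2" by (rule mult_right_mono) simp
  then show "y \<bullet> (A *v y) \<le> hi * (norm y)\<^sup>2"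
    using min[of y] by (simp add: matrix_vector_mult_uminus_left)
qed

lemma mult_le_Young:
  fixes a b e :: real
  assumes "e > 0"
  shows "a * b \<le> (a\<^sup>2 / e + e * b\<^sup>2) / 2"
proof -
  have "0 \<le> (a - e * b)\<^sup>2 / e" using assms by simp
  also have "\<dots> = a\<^sup>2 / e + e * b\<^sup>2 - 2 * (a * b)"
    using assms by (simp add: power2_eq_square field_simps)
  finally show ?thesis by simp
qed

lemma le_sqrt_mult_if_sq_le:
  fixes x t D :: real
  assumes "0 \<le> x" "0 \<le> t" "x\<^sup>2 \<le> D * t\<^sup>2"
  shows "x \<le> sqrt D * t"
proof -
  have "x = sqrt (x\<^sup>2)" using assms(1) by simp
  also have "\<dots> \<le> sqrt (D * t\<^sup>2)" using assms(3) by (rule real_sqrt_le_mono)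
  also have "\<dots> = sqrt D * t" using assms(2) by (simp add: real_sqrt_mult)
  finally show ?thesis .
qed

lemma le_mult_if_le_affine:
  fixes x y a b c T :: real
  assumes "x \<le> a * y + b" "y \<le> c * T" "1 \<le> T" "0 \<le> a" "0 \<le> b"
  shows "x \<le> (a * c + b) * T"
proof -
  have "a * y \<le> a * (c * T)" using assms(2,4) by (rule mult_left_mono)
  moreover have "b \<le> b * T" using mult_left_mono[OF assms(3,5)] by simp
  ultimately show ?thesis using assms(1) by (simp add: algebra_simps)
qed

lemma sq_le_of_affine_lower_bound:
  fixes s z M0 M1 :: real
  assumes "M0 > 0" and "\<bar>z\<bar> \<ge> M0 * \<bar>s\<bar> - M1"
  shows "s\<^sup>2 \<le> 2 / M0\<^sup>2 * z\<^sup>2 + 2 * M1\<^sup>2 / M0\<^sup>2"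
proof -
  have "(M0 * \<bar>s\<bar>)\<^sup>2 \<le> (\<bar>z\<bar> + M1)\<^sup>2" using assms by (intro power_mono) auto
  also have "\<dots> \<le> 2 * z\<^sup>2 + 2 * M1\<^sup>2"
    using zero_le_power2[of "\<bar>z\<bar> - M1"] by (simp add: power2_eq_square algebra_simps)
  finally have "M0\<^sup>2 * s\<^sup>2 \<le> 2 * z\<^sup>2 + 2 * M1\<^sup>2" by (simp add: power_mult_distrib)
  then show ?thesis using assms(1) by (simp add: field_simps)
qed

lemma sq_le_of_affine_upper_bound:
  fixes b s K0 K1 :: real
  assumes "\<bar>b\<bar> \<le> K0 * \<bar>s\<bar> + K1"
  shows "b\<^sup>2 \<le> 2 * K0\<^sup>2 * s\<^sup>2 + 2 * K1\<^sup>2"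
proof -
  have "b\<^sup>2 \<le> (K0 * \<bar>s\<bar> + K1)\<^sup>2" using assms by (metis abs_ge_zero power2_abs power_mono order_trans)
  also have "\<dots> \<le> 2 * K0\<^sup>2 * s\<^sup>2 + 2 * K1\<^sup>2"
    using zero_le_power2[of "K0 * \<bar>s\<bar> - K1"] by (simp add: power2_eq_square algebra_simps)
  finally show ?thesis .
qed

lemma mono_mult_nonneg:
  fixes \<beta> \<zeta> :: "real \<Rightarrow> real"
  assumes "mono \<beta>" "\<beta> 0 = 0" "mono \<zeta>" "\<zeta> 0 = 0"
  shows "0 \<le> \<beta> s * \<zeta> s"
proof (cases "0 \<le> s")
  case True
  then show ?thesis using assms monoD[OF assms(1), of 0 s] monoD[OF assms(3), of 0 s] by simp
next
  case False
  then show ?thesis using assms monoD[OF assms(1), of s 0] monoD[OF assms(3), of s 0]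
    by (simp add: mult_nonpos_nonpos)
qed

section \<open>Piecewise constant reconstructions and L2 norms\<close>

lemma PiD_eq_on_cell:
  assumes "disjoint_family_on U I" "finite I" "i \<in> I" "x \<in> U i"
  shows "PiD I U v x = v i"
proof -
  have "PiD I U v x = v i * indicator (U i) x + (\<Sum>j\<in>I - {i}. v j * indicator (U j) x)"
    unfolding PiD_def by (rule sum.remove[OF assms(2,3)])
  also have "(\<Sum>j\<in>I - {i}. v j * indicator (U j) x) = 0"
  proof (rule sum.neutral, rule ballI)
    fix j assume "j \<in> I - {i}"
    then have "x \<notin> U j" using assms(1,3,4) unfolding disjoint_family_on_def by auto
    then show "v j * indicator (U j) x = 0" by simp
  qed
  finally show ?thesis using assms(4) by simp
qed

lemma PiD_comp:
  assumes "disjoint_family_on U I" "finite I" "x \<in> (\<Union>i\<in>I. U i)"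
  shows "PiD I U (g \<circ> v) x = g (PiD I U v x)"
proof -
  obtain i where "i \<in> I" "x \<in> U i" using assms(3) by blast
  then show ?thesis using PiD_eq_on_cell[OF assms(1,2)] by simp
qed

lemma PiD_sq_le_sum_sq:
  assumes "disjoint_family_on U I" "finite I" "x \<in> (\<Union>i\<in>I. U i)" "v \<in> XD I Ib"
  shows "(PiD I U v x)\<^sup>2 \<le> (\<Sum>j\<in>I - Ib. (v j)\<^sup>2)"
proof -
  obtain i where "i \<in> I" "x \<in> U i" using assms(3) by blast
  then have "PiD I U v x = v i" using PiD_eq_on_cell[OF assms(1,2)] by blast
  moreover have "(v i)\<^sup>2 \<le> (\<Sum>j\<in>I - Ib. (v j)\<^sup>2)"
  proof (cases "i \<in> Ib")
    case True
    then show ?thesis using assms(4) unfolding XD_def by (simp add: sum_nonneg)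
  next
    case False
    then show ?thesis using \<open>i \<in> I\<close> assms(2) by (intro member_le_sum) auto
  qed
  ultimately show ?thesis by simp
qed

lemma L2_PiD:
  assumes "finite_measure (lebesgue_on \<Omega>)" "\<forall>i\<in>I. U i \<in> sets lebesgue"
  shows "L2 \<Omega> (PiD I U v)"
proof -
  have meas: "PiD I U v \<in> borel_measurable (lebesgue_on \<Omega>)"
    unfolding PiD_def[abs_def] using assms(2)
    by (intro borel_measurable_sum borel_measurable_times borel_measurable_const
        measurable_restrict_space1 borel_measurable_indicator) auto
  have "\<bar>PiD I U v x\<bar> \<le> (\<Sum>i\<in>I. \<bar>v i\<bar>)" for x
    unfolding PiD_def by (rule order_trans[OF sum_abs sum_mono]) (simp add: abs_mult indicator_def)
  then have "\<bar>PiD I U v x\<bar> \<le> \<bar>\<Sum>i\<in>I. \<bar>v i\<bar>\<bar>" for x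
    by (simp add: sum_nonneg)
  then have "(PiD I U v x)\<^sup>2 \<le> (\<Sum>i\<in>I. \<bar>v i\<bar>)\<^sup>2" for x
    by (simp only: abs_le_square_iff)
  then have "integrable (lebesgue_on \<Omega>) (\<lambda>x. (PiD I U v x)\<^sup>2)"
    using meas by (intro finite_measure.integrable_const_bound[OF assms(1)]) auto
  then show ?thesis using meas unfolding L2_def by simp
qed

lemma L2_inner_integrable:
  fixes f g :: "'a::euclidean_space \<Rightarrow> 'b::euclidean_space"
  assumes "L2 \<Omega> f" "L2 \<Omega> g"
  shows "integrable (lebesgue_on \<Omega>) (\<lambda>x. f x \<bullet> g x)"
proof (rule Bochner_Integration.integrable_bound)
  show "integrable (lebesgue_on \<Omega>) (\<lambda>x. ((norm (f x))\<^sup>2 + (norm (g x))\<^sup>2) / 2)"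
    using assms unfolding L2_def by auto
  show "(\<lambda>x. f x \<bullet> g x) \<in> borel_measurable (lebesgue_on \<Omega>)"
    using assms unfolding L2_def by (intro borel_measurable_inner) auto
  have "\<bar>f x \<bullet> g x\<bar> \<le> ((norm (f x))\<^sup>2 + (norm (g x))\<^sup>2) / 2" for x
    using order_trans[OF Cauchy_Schwarz_ineq2 mult_le_Young[of 1]] by simp
  then show "AE x in lebesgue_on \<Omega>. norm (f x \<bullet> g x) \<le> norm (((norm (f x))\<^sup>2 + (norm (g x))\<^sup>2) / 2)"
    by simp
qed

lemma L2norm_nonneg: "0 \<le> L2norm \<Omega> g"
  unfolding L2norm_def by simp

lemma L2norm_sq: "(L2norm \<Omega> g)\<^sup>2 = (\<integral>x. (norm (g x))\<^sup>2 \<partial>lebesgue_on \<Omega>)"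
  unfolding L2norm_def by (simp add: integral_nonneg_AE)

lemma abs_integral_inner_le_Young:
  fixes f g :: "'a::euclidean_space \<Rightarrow> 'b::euclidean_space"
  assumes f: "L2 \<Omega> f" and g: "L2 \<Omega> g" and "e > 0"
  shows "\<bar>\<integral>x. f x \<bullet> g x \<partial>lebesgue_on \<Omega>\<bar> \<le> ((L2norm \<Omega> f)\<^sup>2 / e + e * (L2norm \<Omega> g)\<^sup>2) / 2"
proof -
  have int: "integrable (lebesgue_on \<Omega>) (\<lambda>x. (norm (f x))\<^sup>2)" "integrable (lebesgue_on \<Omega>) (\<lambda>x. (norm (g x))\<^sup>2)"
    using f g unfolding L2_def by auto
  have "\<bar>\<integral>x. f x \<bullet> g x \<partial>lebesgue_on \<Omega>\<bar> \<le> (\<integral>x. \<bar>f x \<bullet> g x\<bar> \<partial>lebesgue_on \<Omega>)"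
    using integral_norm_bound[of "lebesgue_on \<Omega>" "\<lambda>x. f x \<bullet> g x"] by simp
  also have "\<dots> \<le> (\<integral>x. ((norm (f x))\<^sup>2 / e + e * (norm (g x))\<^sup>2) / 2 \<partial>lebesgue_on \<Omega>)"
  proof (rule integral_mono)
    show "integrable (lebesgue_on \<Omega>) (\<lambda>x. \<bar>f x \<bullet> g x\<bar>)"
      using L2_inner_integrable[OF f g] by simp
    show "integrable (lebesgue_on \<Omega>) (\<lambda>x. ((norm (f x))\<^sup>2 / e + e * (norm (g x))\<^sup>2) / 2)"
      using int by auto
    fix x
    show "\<bar>f x \<bullet> g x\<bar> \<le> ((norm (f x))\<^sup>2 / e + e * (norm (g x))\<^sup>2) / 2"
      using Cauchy_Schwarz_ineq2[of "f x" "g x"] mult_le_Young[OF \<open>e > 0\<close>, of "norm (f x)" "norm (g x)"]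
      by (rule order_trans)
  qed
  also have "\<dots> = ((L2norm \<Omega> f)\<^sup>2 / e + e * (L2norm \<Omega> g)\<^sup>2) / 2"
    unfolding L2norm_sq using int by simp
  finally show ?thesis .
qed

lemma L2norm_sq_le_of_pointwise:
  fixes g h :: "'a::euclidean_space \<Rightarrow> real"
  assumes "finite_measure (lebesgue_on \<Omega>)" "L2 \<Omega> g" "L2 \<Omega> h"
    and "\<And>x. x \<in> \<Omega> \<Longrightarrow> (g x)\<^sup>2 \<le> a * (h x)\<^sup>2 + b"
  shows "(L2norm \<Omega> g)\<^sup>2 \<le> a * (L2norm \<Omega> h)\<^sup>2 + b * measure (lebesgue_on \<Omega>) \<Omega>"
proof -
  have int: "integrable (lebesgue_on \<Omega>) (\<lambda>x. (g x)\<^sup>2)" "integrable (lebesgue_on \<Omega>) (\<lambda>x. (h x)\<^sup>2)"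
    using assms(2,3) unfolding L2_def by auto
  have "(L2norm \<Omega> g)\<^sup>2 \<le> (\<integral>x. a * (h x)\<^sup>2 + b \<partial>lebesgue_on \<Omega>)"
    unfolding L2norm_sq using assms(1,4) int
    by (intro integral_mono) (auto intro: finite_measure.integrable_const)
  also have "\<dots> = a * (L2norm \<Omega> h)\<^sup>2 + b * measure (lebesgue_on \<Omega>) \<Omega>"
    unfolding L2norm_sq using assms(1) int by (simp add: finite_measure.integrable_const)
  finally show ?thesis .
qed

lemma L2norm_PiD_sq_le_sum_sq:
  assumes GD: "is_GD_pc \<Omega> I Ib U Grad Q" and fm: "finite_measure (lebesgue_on \<Omega>)"
    and v: "v \<in> XD I Ib"
  shows "(L2norm \<Omega> (PiD I U v))\<^sup>2 \<le> measure (lebesgue_on \<Omega>) \<Omega> * (\<Sum>j\<in>I - Ib. (v j)\<^sup>2)"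
proof -
  have fin: "finite I" and disj: "disjoint_family_on U I" and cover: "(\<Union>i\<in>I. U i) = \<Omega>"
    and sets: "\<forall>i\<in>I. U i \<in> sets lebesgue"
    using GD unfolding is_GD_pc_def by auto
  have "(L2norm \<Omega> (PiD I U v))\<^sup>2 \<le> (\<integral>x. (\<Sum>j\<in>I - Ib. (v j)\<^sup>2) \<partial>lebesgue_on \<Omega>)"
    unfolding L2norm_sq
  proof (rule integral_mono)
    show "integrable (lebesgue_on \<Omega>) (\<lambda>x. (norm (PiD I U v x))\<^sup>2)"
      using L2_PiD[OF fm sets] unfolding L2_def by simp
    show "integrable (lebesgue_on \<Omega>) (\<lambda>x. \<Sum>j\<in>I - Ib. (v j)\<^sup>2)"
      using fm by (rule finite_measure.integrable_const)
    show "(norm (PiD I U v x))\<^sup>2 \<le> (\<Sum>j\<in>I - Ib. (v j)\<^sup>2)" if "x \<in> space (lebesgue_on \<Omega>)" for x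
      using PiD_sq_le_sum_sq[OF disj fin _ v] cover that by simp
  qed
  then show ?thesis by simp
qed

lemma AE_quadratic_form_bounds:
  fixes \<Lambda> :: "'a \<Rightarrow> real^'n^'n" and g :: "'a \<Rightarrow> real^'n"
  assumes "AE x in M. transpose (\<Lambda> x) = \<Lambda> x
        \<and> (\<forall>c. (\<exists>v. v \<noteq> 0 \<and> \<Lambda> x *v v = c *\<^sub>R v) \<longrightarrow> lam_lo \<le> c \<and> c \<le> lam_hi)"
  shows "AE x in M. lam_lo * (norm (g x))\<^sup>2 \<le> (\<Lambda> x *v g x) \<bullet> g x
      \<and> (\<Lambda> x *v g x) \<bullet> g x \<le> lam_hi * (norm (g x))\<^sup>2"
  using assms
proof (rule eventually_mono)
  fix x
  assume H: "transpose (\<Lambda> x) = \<Lambda> x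
    \<and> (\<forall>c. (\<exists>v. v \<noteq> 0 \<and> \<Lambda> x *v v = c *\<^sub>R v) \<longrightarrow> lam_lo \<le> c \<and> c \<le> lam_hi)"
  then show "lam_lo * (norm (g x))\<^sup>2 \<le> (\<Lambda> x *v g x) \<bullet> g x
    \<and> (\<Lambda> x *v g x) \<bullet> g x \<le> lam_hi * (norm (g x))\<^sup>2"
    using symmetric_matrix_quadratic_form_bounds[OF conjunct1[OF H] conjunct2[OF H], of "g x"]
    by (simp add: inner_commute[of "\<Lambda> x *v g x"])
qed

lemma integral_quadratic_form_ge:
  fixes \<Lambda> :: "'a::euclidean_space \<Rightarrow> real^'n^'n" and g :: "'a \<Rightarrow> real^'n"
  assumes "\<Lambda> \<in> borel_measurable (lebesgue_on \<Omega>)" and g: "L2 \<Omega> g" and "0 \<le> lam_lo"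
    and eigenvalues: "AE x in lebesgue_on \<Omega>. transpose (\<Lambda> x) = \<Lambda> x
        \<and> (\<forall>c. (\<exists>v. v \<noteq> 0 \<and> \<Lambda> x *v v = c *\<^sub>R v) \<longrightarrow> lam_lo \<le> c \<and> c \<le> lam_hi)"
  shows "lam_lo * (L2norm \<Omega> g)\<^sup>2 \<le> (\<integral>x. (\<Lambda> x *v g x) \<bullet> g x \<partial>lebesgue_on \<Omega>)"
proof -
  note bounds = AE_quadratic_form_bounds[OF eigenvalues, of g]
  have int: "integrable (lebesgue_on \<Omega>) (\<lambda>x. (norm (g x))\<^sup>2)"
    and [measurable]: "g \<in> borel_measurable (lebesgue_on \<Omega>)"
    using g unfolding L2_def by auto
  have "integrable (lebesgue_on \<Omega>) (\<lambda>x. (\<Lambda> x *v g x) \<bullet> g x)"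
  proof (rule Bochner_Integration.integrable_bound)
    show "integrable (lebesgue_on \<Omega>) (\<lambda>x. lam_hi * (norm (g x))\<^sup>2)"
      using int by simp
    have "continuous_on UNIV (\<lambda>p::(real^'n^'n) \<times> (real^'n). (fst p *v snd p) \<bullet> snd p)"
      unfolding matrix_vector_mult_def by (intro continuous_intros)
    then show "(\<lambda>x. (\<Lambda> x *v g x) \<bullet> g x) \<in> borel_measurable (lebesgue_on \<Omega>)"
      using borel_measurable_continuous_Pair[OF assms(1), of g] by simp
    show "AE x in lebesgue_on \<Omega>. norm ((\<Lambda> x *v g x) \<bullet> g x) \<le> norm (lam_hi * (norm (g x))\<^sup>2)"
      using bounds
    proof (rule eventually_mono)
      fix x
      assume "lam_lo * (norm (g x))\<^sup>2 \<le> (\<Lambda> x *v g x) \<bullet> g x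
        \<and> (\<Lambda> x *v g x) \<bullet> g x \<le> lam_hi * (norm (g x))\<^sup>2"
      moreover have "0 \<le> lam_lo * (norm (g x))\<^sup>2" using \<open>0 \<le> lam_lo\<close> by simp
      ultimately show "norm ((\<Lambda> x *v g x) \<bullet> g x) \<le> norm (lam_hi * (norm (g x))\<^sup>2)"
        by auto
    qed
  qed
  then have "(\<integral>x. lam_lo * (norm (g x))\<^sup>2 \<partial>lebesgue_on \<Omega>) \<le> (\<integral>x. (\<Lambda> x *v g x) \<bullet> g x \<partial>lebesgue_on \<Omega>)"
    using int bounds by (intro integral_mono_AE) (auto elim: eventually_mono)
  then show ?thesis unfolding L2norm_sq by simp
qed

section \<open>Boundedness of the discrete Poincare constant\<close>

lemma Grad_sum_AE:
  assumes GD: "is_GD_pc \<Omega> I Ib U Grad Q" and "finite F" and "\<And>j. j \<in> F \<Longrightarrow> e j \<in> XD I Ib"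
  shows "AE x in lebesgue_on \<Omega>. Grad (\<lambda>i. \<Sum>j\<in>F. c j * e j i) x = (\<Sum>j\<in>F. c j *\<^sub>R Grad (e j) x)"
proof -
  have lin: "\<And>v w a b. v \<in> XD I Ib \<Longrightarrow> w \<in> XD I Ib \<Longrightarrow>
      AE x in lebesgue_on \<Omega>. Grad (\<lambda>i. a * v i + b * w i) x = a *\<^sub>R Grad v x + b *\<^sub>R Grad w x"
    using GD unfolding is_GD_pc_def by blast
  show ?thesis
    using assms(2,3)
  proof (induction F rule: finite_induct)
    case empty
    have "(\<lambda>_. 0) \<in> XD I Ib" unfolding XD_def by simp
    from lin[OF this this, of 0 0] show ?case by simp
  next
    case (insert a F)
    have "(\<lambda>i. \<Sum>j\<in>F. c j * e j i) \<in> XD I Ib"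
      using insert.prems unfolding XD_def by (auto intro!: sum.neutral)
    moreover have "e a \<in> XD I Ib" using insert.prems by blast
    ultimately have "AE x in lebesgue_on \<Omega>. Grad (\<lambda>i. 1 * (\<Sum>j\<in>F. c j * e j i) + c a * e a i) x
        = 1 *\<^sub>R Grad (\<lambda>i. \<Sum>j\<in>F. c j * e j i) x + c a *\<^sub>R Grad (e a) x"
      by (rule lin)
    moreover have "AE x in lebesgue_on \<Omega>. Grad (\<lambda>i. \<Sum>j\<in>F. c j * e j i) x = (\<Sum>j\<in>F. c j *\<^sub>R Grad (e j) x)"
      using insert.IH insert.prems by blast
    ultimately show ?case
      by eventually_elim (use insert.hyps in \<open>simp add: add.commute\<close>)
  qed
qed

lemma Grad_eq_sum_coordinates:
  assumes GD: "is_GD_pc \<Omega> I Ib U Grad Q" and w: "w \<in> XD I Ib"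
  shows "AE x in lebesgue_on \<Omega>. Grad w x = (\<Sum>j\<in>I - Ib. w j *\<^sub>R Grad (\<lambda>i. if i = j then 1 else 0) x)"
proof -
  have fin: "finite (I - Ib)" using GD unfolding is_GD_pc_def by auto
  have w_eq: "(\<lambda>i. \<Sum>j\<in>I - Ib. w j * (if i = j then 1 else 0)) = w"
  proof
    fix i
    show "(\<Sum>j\<in>I - Ib. w j * (if i = j then 1 else 0)) = w i"
    proof (cases "i \<in> I - Ib")
      case True
      then show ?thesis using fin by (simp add: if_distrib cong: if_cong)
    next
      case False
      then show ?thesis using w unfolding XD_def by (auto intro!: sum.neutral)
    qed
  qed
  have e: "\<And>j. j \<in> I - Ib \<Longrightarrow> (\<lambda>i. if i = j then 1 else 0) \<in> XD I Ib"
    unfolding XD_def by auto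
  from Grad_sum_AE[where c = w and e = "\<lambda>j i. if i = j then 1 else 0", OF GD fin e]
  show ?thesis unfolding w_eq .
qed

lemma L2norm_Grad_sq_eq_Gram:
  fixes Grad :: "(nat \<Rightarrow> real) \<Rightarrow> 'a::euclidean_space \<Rightarrow> 'b::euclidean_space"
  assumes GD: "is_GD_pc \<Omega> I Ib U Grad Q" and w: "w \<in> XD I Ib"
  defines "g \<equiv> \<lambda>j. Grad (\<lambda>i. if i = j then 1 else 0)"
  shows "(L2norm \<Omega> (Grad w))\<^sup>2 =
    (\<Sum>j\<in>I - Ib. \<Sum>k\<in>I - Ib. w j * w k * (\<integral>x. g j x \<bullet> g k x \<partial>lebesgue_on \<Omega>))"
proof -
  have L2g: "L2 \<Omega> (g j)" if "j \<in> I - Ib" for j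
  proof -
    have "(\<lambda>i. if i = j then 1 else 0) \<in> XD I Ib" using that unfolding XD_def by auto
    then show ?thesis using GD unfolding is_GD_pc_def g_def by blast
  qed
  then have "(\<lambda>x. \<Sum>j\<in>I - Ib. w j *\<^sub>R g j x) \<in> borel_measurable (lebesgue_on \<Omega>)"
    unfolding L2_def by (intro borel_measurable_sum borel_measurable_scaleR borel_measurable_const) auto
  moreover have "Grad w \<in> borel_measurable (lebesgue_on \<Omega>)"
    using GD w unfolding is_GD_pc_def L2_def by blast
  ultimately have [measurable]:
    "(\<lambda>x. (norm (\<Sum>j\<in>I - Ib. w j *\<^sub>R g j x))\<^sup>2) \<in> borel_measurable (lebesgue_on \<Omega>)"
    "(\<lambda>x. (norm (Grad w x))\<^sup>2) \<in> borel_measurable (lebesgue_on \<Omega>)"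
    by measurable
  have int: "integrable (lebesgue_on \<Omega>) (\<lambda>x. w j * w k * (g j x \<bullet> g k x))"
    if "j \<in> I - Ib" "k \<in> I - Ib" for j k
    using L2_inner_integrable[OF L2g L2g] that by simp
  have "(L2norm \<Omega> (Grad w))\<^sup>2 = (\<integral>x. (norm (\<Sum>j\<in>I - Ib. w j *\<^sub>R g j x))\<^sup>2 \<partial>lebesgue_on \<Omega>)"
    unfolding L2norm_sq
  proof (rule integral_cong_AE)
    show "AE x in lebesgue_on \<Omega>. (norm (Grad w x))\<^sup>2 = (norm (\<Sum>j\<in>I - Ib. w j *\<^sub>R g j x))\<^sup>2"
      using Grad_eq_sum_coordinates[OF GD w] by (auto simp: g_def elim: eventually_mono)
  qed simp_all
  also have "\<dots> = (\<integral>x. (\<Sum>j\<in>I - Ib. \<Sum>k\<in>I - Ib. w j * w k * (g j x \<bullet> g k x)) \<partial>lebesgue_on \<Omega>)"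
    by (simp add: power2_norm_eq_inner inner_sum_left inner_sum_right sum_distrib_left mult.assoc)
      (subst sum.swap, simp add: inner_commute mult.left_commute)
  also have "\<dots> = (\<Sum>j\<in>I - Ib. \<integral>x. (\<Sum>k\<in>I - Ib. w j * w k * (g j x \<bullet> g k x)) \<partial>lebesgue_on \<Omega>)"
    using int by (intro Bochner_Integration.integral_sum Bochner_Integration.integrable_sum) auto
  also have "\<dots> = (\<Sum>j\<in>I - Ib. \<Sum>k\<in>I - Ib. \<integral>x. w j * w k * (g j x \<bullet> g k x) \<partial>lebesgue_on \<Omega>)"
    using int by (intro sum.cong refl Bochner_Integration.integral_sum) auto
  also have "\<dots> = (\<Sum>j\<in>I - Ib. \<Sum>k\<in>I - Ib. w j * w k * (\<integral>x. g j x \<bullet> g k x \<partial>lebesgue_on \<Omega>))"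
    by simp
  finally show ?thesis .
qed

lemma compact_unit_sphere_coordinates:
  assumes "finite J"
  shows "compact {w::nat \<Rightarrow> real. (\<forall>i. i \<notin> J \<longrightarrow> w i = 0) \<and> (\<Sum>j\<in>J. (w j)\<^sup>2) = 1}"
    (is "compact ?S")
proof -
  define X where "X = (\<lambda>i::nat. if i \<in> J then {-1..1::real} else {0})"
  have "compactin (product_topology (\<lambda>i. euclidean) UNIV) (PiE UNIV X)"
    unfolding compactin_PiE X_def by simp
  then have compact: "compact (Pi UNIV X)"
    by (simp add: euclidean_product_topology PiE_UNIV_domain)
  have "?S = (\<Inter>i\<in>-J. {w. w i = 0}) \<inter> {w. (\<Sum>j\<in>J. (w j)\<^sup>2) = 1}"
    by auto
  then have closed: "closed ?S"
    by (auto intro!: closed_Int closed_INT closed_Collect_eq continuous_intros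
        continuous_on_product_coordinates)
  have "?S \<subseteq> Pi UNIV X"
  proof
    fix w assume w: "w \<in> ?S"
    have "(w i)\<^sup>2 \<le> 1" if "i \<in> J" for i
      using w member_le_sum[of i J "\<lambda>j. (w j)\<^sup>2"] that assms by simp
    then show "w \<in> Pi UNIV X"
      using w unfolding X_def by (auto simp: abs_square_le_1 abs_le_iff)
  qed
  then have "Pi UNIV X \<inter> ?S = ?S" by (rule Int_absorb1)
  then show ?thesis using compact_Int_closed[OF compact closed] by (simp only:)
qed

lemma quadratic_form_coercive:
  fixes G :: "nat \<Rightarrow> nat \<Rightarrow> real"
  assumes fin: "finite J"
    and pos: "\<And>w. (\<forall>i. i \<notin> J \<longrightarrow> w i = 0) \<Longrightarrow> (\<Sum>j\<in>J. (w j)\<^sup>2) = 1 \<Longrightarrow>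
                0 < (\<Sum>j\<in>J. \<Sum>k\<in>J. w j * w k * G j k)"
  obtains c where "c > 0" "\<And>w. c * (\<Sum>j\<in>J. (w j)\<^sup>2) \<le> (\<Sum>j\<in>J. \<Sum>k\<in>J. w j * w k * G j k)"
proof (cases "J = {}")
  case True
  then show thesis using that[of 1] by simp
next
  case False
  then obtain j0 where j0: "j0 \<in> J" by blast
  define q where "q = (\<lambda>w::nat \<Rightarrow> real. \<Sum>j\<in>J. \<Sum>k\<in>J. w j * w k * G j k)"
  define S where "S = {w::nat \<Rightarrow> real. (\<forall>i. i \<notin> J \<longrightarrow> w i = 0) \<and> (\<Sum>j\<in>J. (w j)\<^sup>2) = 1}"
  have "(\<Sum>j\<in>J. (if j = j0 then 1 else 0 :: real)\<^sup>2) = (\<Sum>j\<in>J. if j = j0 then 1 else 0)"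
    by (intro sum.cong) auto
  then have "(\<lambda>i. if i = j0 then 1 else 0) \<in> S" unfolding S_def using j0 fin by simp
  then have "S \<noteq> {}" by blast
  moreover have "continuous_on S q" unfolding q_def
    by (intro continuous_intros continuous_on_product_coordinates[THEN continuous_on_subset]) auto
  moreover have "compact S" unfolding S_def by (rule compact_unit_sphere_coordinates[OF fin])
  ultimately obtain w0 where w0: "w0 \<in> S" and min: "\<And>w. w \<in> S \<Longrightarrow> q w0 \<le> q w"
    using continuous_attains_inf[of S q] by blast
  txt \<open>By homogeneity, the minimum of q on the unit sphere S is a coercivity constant.\<close>
  have "q w0 * (\<Sum>j\<in>J. (w j)\<^sup>2) \<le> q w" for w
  proof (cases "(\<Sum>j\<in>J. (w j)\<^sup>2) = 0")
    case True
    then have "\<forall>j\<in>J. w j = 0" using fin by (simp add: sum_nonneg_eq_0_iff)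
    then show ?thesis using True unfolding q_def by simp
  next
    case False
    define s where "s = (\<Sum>j\<in>J. (w j)\<^sup>2)"
    have "s > 0" using False unfolding s_def by (simp add: less_le sum_nonneg)
    define w' where "w' = (\<lambda>i. if i \<in> J then w i / sqrt s else 0)"
    have "(\<Sum>j\<in>J. (w' j)\<^sup>2) = (\<Sum>j\<in>J. (w j)\<^sup>2 / s)"
      unfolding w'_def using \<open>s > 0\<close> by (intro sum.cong refl) (simp add: power_divide)
    also have "\<dots> = 1" using \<open>s > 0\<close> unfolding s_def by (simp add: sum_divide_distrib[symmetric])
    finally have "q w0 \<le> q w'" using min unfolding S_def w'_def by auto
    also have "q w' = q w / s"
      unfolding q_def w'_def sum_divide_distrib using \<open>s > 0\<close>
      by (intro sum.cong refl) (simp add: field_simps real_sqrt_mult[symmetric])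
    finally show ?thesis using \<open>s > 0\<close> unfolding s_def by (simp add: field_simps)
  qed
  moreover have "q w0 > 0" using w0 pos unfolding S_def q_def by blast
  ultimately show thesis using that unfolding q_def by blast
qed

lemma L2norm_Grad_pos:
  assumes "is_GD_pc \<Omega> I Ib U Grad Q" "w \<in> XD I Ib" "w \<noteq> (\<lambda>_. 0)"
  shows "0 < L2norm \<Omega> (Grad w)"
  using assms L2norm_nonneg[of \<Omega> "Grad w"] unfolding is_GD_pc_def by force

lemma L2norm_Grad_coercive:
  fixes Grad :: "(nat \<Rightarrow> real) \<Rightarrow> 'a::euclidean_space \<Rightarrow> 'b::euclidean_space"
  assumes GD: "is_GD_pc \<Omega> I Ib U Grad Q"
  obtains c where "c > 0" "\<And>w. w \<in> XD I Ib \<Longrightarrow> c * (\<Sum>j\<in>I - Ib. (w j)\<^sup>2) \<le> (L2norm \<Omega> (Grad w))\<^sup>2"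
proof -
  define g where "g = (\<lambda>j. Grad (\<lambda>i. if i = j then 1 else 0))"
  define G where "G = (\<lambda>j k. \<integral>x. g j x \<bullet> g k x \<partial>lebesgue_on \<Omega>)"
  have gram: "(L2norm \<Omega> (Grad w))\<^sup>2 = (\<Sum>j\<in>I - Ib. \<Sum>k\<in>I - Ib. w j * w k * G j k)"
    if "w \<in> XD I Ib" for w
    using L2norm_Grad_sq_eq_Gram[OF GD that] unfolding G_def g_def .
  have pos: "0 < (\<Sum>j\<in>I - Ib. \<Sum>k\<in>I - Ib. w j * w k * G j k)"
    if "\<forall>i. i \<notin> I - Ib \<longrightarrow> w i = 0" and "(\<Sum>j\<in>I - Ib. (w j)\<^sup>2) = 1" for w
  proof -
    have w: "w \<in> XD I Ib" "w \<noteq> (\<lambda>_. 0)" using that unfolding XD_def by auto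
    then have "0 < (L2norm \<Omega> (Grad w))\<^sup>2" using L2norm_Grad_pos[OF GD w] by simp
    then show ?thesis using gram[OF w(1)] by simp
  qed
  have "finite (I - Ib)" using GD unfolding is_GD_pc_def by auto
  then obtain c where "c > 0"
    and c: "\<And>w. c * (\<Sum>j\<in>I - Ib. (w j)\<^sup>2) \<le> (\<Sum>j\<in>I - Ib. \<Sum>k\<in>I - Ib. w j * w k * G j k)"
    using quadratic_form_coercive pos by blast
  have "c * (\<Sum>j\<in>I - Ib. (w j)\<^sup>2) \<le> (L2norm \<Omega> (Grad w))\<^sup>2" if "w \<in> XD I Ib" for w
    using c[of w] gram[OF that] by simp
  then show thesis by (rule that[OF \<open>c > 0\<close>])
qed

text \<open>CD is a supremum, so the hypothesis CD \<le> Cbar bounds the quotients only because their set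
  is bounded above.\<close>

lemma CD_set_bdd_above:
  fixes Grad :: "(nat \<Rightarrow> real) \<Rightarrow> 'a::euclidean_space \<Rightarrow> 'b::euclidean_space"
  assumes GD: "is_GD_pc \<Omega> I Ib U Grad Q" and fm: "finite_measure (lebesgue_on \<Omega>)"
  shows "bdd_above {L2norm \<Omega> (PiD I U v) / L2norm \<Omega> (Grad v) | v. v \<in> XD I Ib \<and> v \<noteq> (\<lambda>_. 0)}"
proof -
  define \<mu> where "\<mu> = measure (lebesgue_on \<Omega>) \<Omega>"
  obtain c where "c > 0"
    and coercive: "\<And>w. w \<in> XD I Ib \<Longrightarrow> c * (\<Sum>j\<in>I - Ib. (w j)\<^sup>2) \<le> (L2norm \<Omega> (Grad w))\<^sup>2"
    using L2norm_Grad_coercive[OF GD] by blast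
  have "L2norm \<Omega> (PiD I U v) / L2norm \<Omega> (Grad v) \<le> sqrt (\<mu> / c)"
    if v: "v \<in> XD I Ib" "v \<noteq> (\<lambda>_. 0)" for v
  proof -
    have "(L2norm \<Omega> (PiD I U v))\<^sup>2 \<le> \<mu> * (\<Sum>j\<in>I - Ib. (v j)\<^sup>2)"
      unfolding \<mu>_def by (rule L2norm_PiD_sq_le_sum_sq[OF GD fm v(1)])
    also have "\<dots> \<le> \<mu> * ((L2norm \<Omega> (Grad v))\<^sup>2 / c)"
      using coercive[OF v(1)] \<open>c > 0\<close> unfolding \<mu>_def
      by (intro mult_left_mono) (auto simp: field_simps)
    finally have "L2norm \<Omega> (PiD I U v) \<le> sqrt (\<mu> / c) * L2norm \<Omega> (Grad v)"
      by (intro le_sqrt_mult_if_sq_le L2norm_nonneg) (simp add: field_simps)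
    then show ?thesis using L2norm_Grad_pos[OF GD v] by (simp add: divide_le_eq)
  qed
  then show ?thesis unfolding bdd_above_def by blast
qed

lemma L2norm_PiD_sq_le_CD:
  fixes Grad :: "(nat \<Rightarrow> real) \<Rightarrow> 'a::euclidean_space \<Rightarrow> 'b::euclidean_space"
  assumes GD: "is_GD_pc \<Omega> I Ib U Grad Q" and fm: "finite_measure (lebesgue_on \<Omega>)"
    and "CD \<Omega> I Ib U Grad \<le> Cbar" and v: "v \<in> XD I Ib"
  shows "(L2norm \<Omega> (PiD I U v))\<^sup>2 \<le> Cbar\<^sup>2 * (L2norm \<Omega> (Grad v))\<^sup>2"
proof (cases "v = (\<lambda>_. 0)")
  case True
  then show ?thesis by (simp add: PiD_def L2norm_def)
next
  case False
  have "L2norm \<Omega> (PiD I U v) / L2norm \<Omega> (Grad v) \<le> CD \<Omega> I Ib U Grad"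
    unfolding CD_def using v False by (intro cSup_upper CD_set_bdd_above[OF GD fm]) blast
  also have "\<dots> \<le> \<bar>Cbar\<bar>" using assms(3) by linarith
  finally have "L2norm \<Omega> (PiD I U v) \<le> \<bar>Cbar\<bar> * L2norm \<Omega> (Grad v)"
    using L2norm_Grad_pos[OF GD v False] by (simp add: divide_le_eq)
  then show ?thesis
    using L2norm_nonneg[of \<Omega> "PiD I U v"] by (metis power2_abs power_mono power_mult_distrib)
qed

section \<open>A priori estimates\<close>

lemma GS_energy_inequality:
  fixes \<Omega> :: "'a::euclidean_space set" and \<Lambda> :: "'a \<Rightarrow> real^'n^'n"
    and Grad :: "(nat \<Rightarrow> real) \<Rightarrow> 'a \<Rightarrow> real^'n"
  assumes "0 \<le> lam_lo"
    and \<zeta>: "mono \<zeta>" "\<zeta> 0 = 0" and \<beta>: "mono \<beta>" "\<beta> 0 = 0"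
    and \<Lambda>: "\<Lambda> \<in> borel_measurable (lebesgue_on \<Omega>)"
    and eigenvalues: "AE x in lebesgue_on \<Omega>. transpose (\<Lambda> x) = \<Lambda> x
        \<and> (\<forall>c. (\<exists>v. v \<noteq> 0 \<and> \<Lambda> x *v v = c *\<^sub>R v) \<longrightarrow> lam_lo \<le> c \<and> c \<le> lam_hi)"
    and GD: "is_GD_pc \<Omega> I Ib U Grad Q" and GS: "solves_GS \<Omega> I Ib U Grad Q \<beta> \<zeta> \<Lambda> f F u"
  shows "lam_lo * (L2norm \<Omega> (Grad (\<zeta> \<circ> u)))\<^sup>2
    \<le> (\<integral>x. Q f x * PiD I U (\<zeta> \<circ> u) x \<partial>lebesgue_on \<Omega>) - (\<integral>x. F x \<bullet> Grad (\<zeta> \<circ> u) x \<partial>lebesgue_on \<Omega>)"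
proof -
  have fin: "finite I" and disj: "disjoint_family_on U I" and cover: "(\<Union>i\<in>I. U i) = \<Omega>"
    and L2_Grad: "\<forall>w\<in>XD I Ib. L2 \<Omega> (Grad w)"
    using GD unfolding is_GD_pc_def by auto
  have "u \<in> XD I Ib" and scheme: "\<forall>w\<in>XD I Ib.
        (\<integral>x. \<beta> (PiD I U u x) * PiD I U w x \<partial>lebesgue_on \<Omega>)
      + (\<integral>x. (\<Lambda> x *v Grad (\<zeta> \<circ> u) x) \<bullet> Grad w x \<partial>lebesgue_on \<Omega>)
      = (\<integral>x. Q f x * PiD I U w x \<partial>lebesgue_on \<Omega>) - (\<integral>x. F x \<bullet> Grad w x \<partial>lebesgue_on \<Omega>)"
    using GS unfolding solves_GS_def by auto
  then have v: "\<zeta> \<circ> u \<in> XD I Ib" using \<zeta>(2) unfolding XD_def by auto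
  have "0 \<le> (\<integral>x. \<beta> (PiD I U u x) * PiD I U (\<zeta> \<circ> u) x \<partial>lebesgue_on \<Omega>)"
    using PiD_comp[OF disj fin] cover mono_mult_nonneg[OF \<beta> \<zeta>]
    by (intro integral_nonneg_AE AE_I2) simp
  moreover have "lam_lo * (L2norm \<Omega> (Grad (\<zeta> \<circ> u)))\<^sup>2
      \<le> (\<integral>x. (\<Lambda> x *v Grad (\<zeta> \<circ> u) x) \<bullet> Grad (\<zeta> \<circ> u) x \<partial>lebesgue_on \<Omega>)"
    using \<Lambda> L2_Grad v \<open>0 \<le> lam_lo\<close> eigenvalues by (intro integral_quadratic_form_ge) auto
  moreover have "(\<integral>x. \<beta> (PiD I U u x) * PiD I U (\<zeta> \<circ> u) x \<partial>lebesgue_on \<Omega>)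
      + (\<integral>x. (\<Lambda> x *v Grad (\<zeta> \<circ> u) x) \<bullet> Grad (\<zeta> \<circ> u) x \<partial>lebesgue_on \<Omega>)
      = (\<integral>x. Q f x * PiD I U (\<zeta> \<circ> u) x \<partial>lebesgue_on \<Omega>) - (\<integral>x. F x \<bullet> Grad (\<zeta> \<circ> u) x \<partial>lebesgue_on \<Omega>)"
    using scheme v by blast
  ultimately show ?thesis by linarith
qed

lemma GS_gradient_estimate:
  fixes \<Omega> :: "'a::euclidean_space set" and \<Lambda> :: "'a \<Rightarrow> real^'n^'n"
    and Grad :: "(nat \<Rightarrow> real) \<Rightarrow> 'a \<Rightarrow> real^'n"
  assumes fm: "finite_measure (lebesgue_on \<Omega>)" and "lam_lo > 0"
    and \<zeta>: "mono \<zeta>" "\<zeta> 0 = 0" and \<beta>: "mono \<beta>" "\<beta> 0 = 0"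
    and \<Lambda>: "\<Lambda> \<in> borel_measurable (lebesgue_on \<Omega>)"
    and eigenvalues: "AE x in lebesgue_on \<Omega>. transpose (\<Lambda> x) = \<Lambda> x
        \<and> (\<forall>c. (\<exists>v. v \<noteq> 0 \<and> \<Lambda> x *v v = c *\<^sub>R v) \<longrightarrow> lam_lo \<le> c \<and> c \<le> lam_hi)"
    and Qf: "L2 \<Omega> (Q f)" and F: "L2 \<Omega> F"
    and GD: "is_GD_pc \<Omega> I Ib U Grad Q" and CD: "CD \<Omega> I Ib U Grad \<le> Cbar"
    and GS: "solves_GS \<Omega> I Ib U Grad Q \<beta> \<zeta> \<Lambda> f F u"
  shows "(L2norm \<Omega> (Grad (\<zeta> \<circ> u)))\<^sup>2
    \<le> (Cbar\<^sup>2 + 1) / lam_lo\<^sup>2 * ((L2norm \<Omega> (Q f))\<^sup>2 + (L2norm \<Omega> F)\<^sup>2)"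
proof -
  define v where "v = \<zeta> \<circ> u"
  define n where "n = L2norm \<Omega> (Grad v)"
  define p where "p = L2norm \<Omega> (PiD I U v)"
  define a where "a = L2norm \<Omega> (Q f)"
  define b where "b = L2norm \<Omega> F"
  define e where "e = lam_lo / (Cbar\<^sup>2 + 1)"
  have "0 < Cbar\<^sup>2 + 1" by (rule add_nonneg_pos[OF zero_le_power2 zero_less_one])
  then have "e > 0" unfolding e_def using \<open>lam_lo > 0\<close> by simp
  have sets: "\<forall>i\<in>I. U i \<in> sets lebesgue" and L2_Grad: "\<forall>w\<in>XD I Ib. L2 \<Omega> (Grad w)"
    using GD unfolding is_GD_pc_def by auto
  have "u \<in> XD I Ib" using GS unfolding solves_GS_def by blast
  then have v: "v \<in> XD I Ib" using \<zeta>(2) unfolding XD_def v_def by auto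
  txt \<open>Young's inequality with weight e, chosen so that the gradient terms can be absorbed.\<close>
  have "lam_lo * n\<^sup>2
      \<le> (\<integral>x. Q f x * PiD I U v x \<partial>lebesgue_on \<Omega>) - (\<integral>x. F x \<bullet> Grad v x \<partial>lebesgue_on \<Omega>)"
    unfolding n_def v_def using \<open>lam_lo > 0\<close>
    by (intro GS_energy_inequality[OF _ \<zeta> \<beta> \<Lambda> eigenvalues GD GS]) simp
  moreover have "(\<integral>x. Q f x * PiD I U v x \<partial>lebesgue_on \<Omega>) \<le> (a\<^sup>2 / e + e * p\<^sup>2) / 2"
    using abs_integral_inner_le_Young[OF Qf L2_PiD[OF fm sets] \<open>e > 0\<close>, of v]
    unfolding a_def p_def by simp
  moreover have "- (\<integral>x. F x \<bullet> Grad v x \<partial>lebesgue_on \<Omega>) \<le> (b\<^sup>2 / e + e * n\<^sup>2) / 2"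
    using abs_integral_inner_le_Young[OF F _ \<open>e > 0\<close>, of "Grad v"] L2_Grad v
    unfolding b_def n_def by auto
  moreover have "e * p\<^sup>2 + e * n\<^sup>2 \<le> lam_lo * n\<^sup>2"
  proof -
    have "p\<^sup>2 \<le> Cbar\<^sup>2 * n\<^sup>2" unfolding p_def n_def by (rule L2norm_PiD_sq_le_CD[OF GD fm CD v])
    then have "e * p\<^sup>2 + e * n\<^sup>2 \<le> e * (Cbar\<^sup>2 + 1) * n\<^sup>2"
      using \<open>e > 0\<close> by (simp add: algebra_simps)
    also have "\<dots> = lam_lo * n\<^sup>2" unfolding e_def using \<open>0 < Cbar\<^sup>2 + 1\<close> by simp
    finally show ?thesis .
  qed
  ultimately have "lam_lo * n\<^sup>2 \<le> a\<^sup>2 / e + b\<^sup>2 / e" by simp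
  then have "n\<^sup>2 \<le> (a\<^sup>2 / e + b\<^sup>2 / e) / lam_lo"
    using \<open>lam_lo > 0\<close> by (simp add: pos_le_divide_eq mult.commute)
  also have "\<dots> = (Cbar\<^sup>2 + 1) / lam_lo\<^sup>2 * (a\<^sup>2 + b\<^sup>2)"
    unfolding e_def using \<open>lam_lo > 0\<close> by (simp add: field_simps power2_eq_square)
  finally show ?thesis unfolding n_def a_def b_def v_def .
qed

lemma L2norm_PiD_comp_sq_le:
  fixes g h :: "real \<Rightarrow> real" and u :: "nat \<Rightarrow> real"
  assumes GD: "is_GD_pc \<Omega> I Ib U Grad Q" and fm: "finite_measure (lebesgue_on \<Omega>)"
    and pointwise: "\<And>s. (g s)\<^sup>2 \<le> a * (h s)\<^sup>2 + b"
  shows "(L2norm \<Omega> (PiD I U (g \<circ> u)))\<^sup>2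
    \<le> a * (L2norm \<Omega> (PiD I U (h \<circ> u)))\<^sup>2 + b * measure (lebesgue_on \<Omega>) \<Omega>"
proof -
  have fin: "finite I" and disj: "disjoint_family_on U I" and cover: "(\<Union>i\<in>I. U i) = \<Omega>"
    and sets: "\<forall>i\<in>I. U i \<in> sets lebesgue"
    using GD unfolding is_GD_pc_def by auto
  have comp: "\<And>k x. x \<in> \<Omega> \<Longrightarrow> PiD I U (k \<circ> u) x = k (PiD I U u x)"
    using PiD_comp[OF disj fin] cover by blast
  show ?thesis
    using L2_PiD[OF fm sets] by (intro L2norm_sq_le_of_pointwise[OF fm]) (simp_all add: comp pointwise)
qed

lemma GS_PiD_growth_estimates:
  fixes \<zeta> \<beta> :: "real \<Rightarrow> real" and u :: "nat \<Rightarrow> real"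
  assumes GD: "is_GD_pc \<Omega> I Ib U Grad Q" and fm: "finite_measure (lebesgue_on \<Omega>)" and "M0 > 0"
    and \<zeta>: "\<forall>s. \<bar>\<zeta> s\<bar> \<ge> M0 * \<bar>s\<bar> - M1" and \<beta>: "\<forall>s. \<bar>\<beta> s\<bar> \<le> K0 * \<bar>s\<bar> + K1"
  shows "(L2norm \<Omega> (PiD I U u))\<^sup>2
      \<le> 2 / M0\<^sup>2 * (L2norm \<Omega> (PiD I U (\<zeta> \<circ> u)))\<^sup>2 + 2 * M1\<^sup>2 / M0\<^sup>2 * measure (lebesgue_on \<Omega>) \<Omega>"
    and "(L2norm \<Omega> (PiD I U (\<beta> \<circ> u)))\<^sup>2
      \<le> 2 * K0\<^sup>2 * (L2norm \<Omega> (PiD I U u))\<^sup>2 + 2 * K1\<^sup>2 * measure (lebesgue_on \<Omega>) \<Omega>"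
proof -
  have "(id s)\<^sup>2 \<le> 2 / M0\<^sup>2 * (\<zeta> s)\<^sup>2 + 2 * M1\<^sup>2 / M0\<^sup>2" for s
    using sq_le_of_affine_lower_bound[OF \<open>M0 > 0\<close>] \<zeta> by simp
  from L2norm_PiD_comp_sq_le[OF GD fm, where g = id and h = \<zeta>, OF this, where u = u]
  show "(L2norm \<Omega> (PiD I U u))\<^sup>2
      \<le> 2 / M0\<^sup>2 * (L2norm \<Omega> (PiD I U (\<zeta> \<circ> u)))\<^sup>2 + 2 * M1\<^sup>2 / M0\<^sup>2 * measure (lebesgue_on \<Omega>) \<Omega>"
    by simp
  have "(\<beta> s)\<^sup>2 \<le> 2 * K0\<^sup>2 * (id s)\<^sup>2 + 2 * K1\<^sup>2" for s
    using sq_le_of_affine_upper_bound \<beta> by simp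
  from L2norm_PiD_comp_sq_le[OF GD fm, where g = \<beta> and h = id, OF this, where u = u]
  show "(L2norm \<Omega> (PiD I U (\<beta> \<circ> u)))\<^sup>2
      \<le> 2 * K0\<^sup>2 * (L2norm \<Omega> (PiD I U u))\<^sup>2 + 2 * K1\<^sup>2 * measure (lebesgue_on \<Omega>) \<Omega>"
    by simp
qed

definition GS_estimate_constant :: "real \<Rightarrow> real \<Rightarrow> real \<Rightarrow> real \<Rightarrow> real \<Rightarrow> real \<Rightarrow> real \<Rightarrow> real" where
  "GS_estimate_constant \<mu> Cbar lam M0 M1 K0 K1 =
    (let D1 = (Cbar\<^sup>2 + 1) / lam\<^sup>2;
         D2 = 2 / M0\<^sup>2 * (Cbar\<^sup>2 * D1) + 2 * M1\<^sup>2 / M0\<^sup>2 * \<mu>;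
         D3 = 2 * K0\<^sup>2 * D2 + 2 * K1\<^sup>2 * \<mu>
     in sqrt D1 + sqrt D2 + sqrt D3)"

lemma GS_estimate_constant_pos:
  assumes "lam > 0" and "\<mu> \<ge> 0"
  shows "GS_estimate_constant \<mu> Cbar lam M0 M1 K0 K1 > 0"
proof -
  have "0 < (Cbar\<^sup>2 + 1) / lam\<^sup>2" using assms(1) by (simp add: add_nonneg_pos)
  then show ?thesis unfolding GS_estimate_constant_def Let_def using assms(2)
    by (simp add: add_pos_nonneg)
qed

lemma GS_a_priori_estimate:
  fixes \<Omega> :: "'a::euclidean_space set" and \<Lambda> :: "'a \<Rightarrow> real^'n^'n"
    and Grad :: "(nat \<Rightarrow> real) \<Rightarrow> 'a \<Rightarrow> real^'n"
  assumes fm: "finite_measure (lebesgue_on \<Omega>)" and "lam_lo > 0" and "M0 > 0"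
    and \<zeta>: "mono \<zeta>" "\<zeta> 0 = 0" "\<forall>s. \<bar>\<zeta> s\<bar> \<ge> M0 * \<bar>s\<bar> - M1"
    and \<beta>: "mono \<beta>" "\<beta> 0 = 0" "\<forall>s. \<bar>\<beta> s\<bar> \<le> K0 * \<bar>s\<bar> + K1"
    and \<Lambda>: "\<Lambda> \<in> borel_measurable (lebesgue_on \<Omega>)"
    and eigenvalues: "AE x in lebesgue_on \<Omega>. transpose (\<Lambda> x) = \<Lambda> x
        \<and> (\<forall>c. (\<exists>v. v \<noteq> 0 \<and> \<Lambda> x *v v = c *\<^sub>R v) \<longrightarrow> lam_lo \<le> c \<and> c \<le> lam_hi)"
    and f: "L2 \<Omega> f" and F: "L2 \<Omega> F"
    and GD: "is_GD_pc \<Omega> I Ib U Grad Q" and CD: "CD \<Omega> I Ib U Grad \<le> Cbar"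
    and GS: "solves_GS \<Omega> I Ib U Grad Q \<beta> \<zeta> \<Lambda> f F u"
  shows "L2norm \<Omega> (PiD I U u) + L2norm \<Omega> (PiD I U (\<beta> \<circ> u)) + L2norm \<Omega> (Grad (\<zeta> \<circ> u))
    \<le> GS_estimate_constant (measure (lebesgue_on \<Omega>) \<Omega>) Cbar lam_lo M0 M1 K0 K1
        * (L2norm \<Omega> (Q f) + L2norm \<Omega> F + 1)"
proof -
  define \<mu> where "\<mu> = measure (lebesgue_on \<Omega>) \<Omega>"
  define D1 where "D1 = (Cbar\<^sup>2 + 1) / lam_lo\<^sup>2"
  define D2 where "D2 = 2 / M0\<^sup>2 * (Cbar\<^sup>2 * D1) + 2 * M1\<^sup>2 / M0\<^sup>2 * \<mu>"
  define D3 where "D3 = 2 * K0\<^sup>2 * D2 + 2 * K1\<^sup>2 * \<mu>"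
  define t where "t = L2norm \<Omega> (Q f) + L2norm \<Omega> F + 1"
  have "u \<in> XD I Ib" using GS unfolding solves_GS_def by blast
  then have v: "\<zeta> \<circ> u \<in> XD I Ib" using \<zeta>(2) unfolding XD_def by auto
  have Qf: "L2 \<Omega> (Q f)" using GD f unfolding is_GD_pc_def by blast
  have "1 \<le> t" and data: "(L2norm \<Omega> (Q f))\<^sup>2 + (L2norm \<Omega> F)\<^sup>2 \<le> t\<^sup>2"
    unfolding t_def using L2norm_nonneg[of \<Omega> "Q f"] L2norm_nonneg[of \<Omega> F]
    by (auto simp: power2_eq_square algebra_simps)
  then have "1 \<le> t\<^sup>2" by simp
  have "(L2norm \<Omega> (Grad (\<zeta> \<circ> u)))\<^sup>2 \<le> D1 * ((L2norm \<Omega> (Q f))\<^sup>2 + (L2norm \<Omega> F)\<^sup>2)"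
    unfolding D1_def
    by (rule GS_gradient_estimate[OF fm \<open>lam_lo > 0\<close> \<zeta>(1,2) \<beta>(1,2) \<Lambda> eigenvalues Qf F GD CD GS])
  also have "\<dots> \<le> D1 * t\<^sup>2" using data by (rule mult_left_mono) (simp add: D1_def)
  finally have grad: "(L2norm \<Omega> (Grad (\<zeta> \<circ> u)))\<^sup>2 \<le> D1 * t\<^sup>2" .
  have PiD_v: "(L2norm \<Omega> (PiD I U (\<zeta> \<circ> u)))\<^sup>2 \<le> Cbar\<^sup>2 * D1 * t\<^sup>2"
    using L2norm_PiD_sq_le_CD[OF GD fm CD v] mult_left_mono[OF grad, of "Cbar\<^sup>2"] by simp
  note growth = GS_PiD_growth_estimates[OF GD fm \<open>M0 > 0\<close> \<zeta>(3) \<beta>(3), where u = u]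
  have u: "(L2norm \<Omega> (PiD I U u))\<^sup>2 \<le> D2 * t\<^sup>2"
    using growth(1) PiD_v \<open>1 \<le> t\<^sup>2\<close> unfolding D2_def \<mu>_def
    by (rule le_mult_if_le_affine) simp_all
  have "(L2norm \<Omega> (PiD I U (\<beta> \<circ> u)))\<^sup>2 \<le> D3 * t\<^sup>2"
    using growth(2) u \<open>1 \<le> t\<^sup>2\<close> unfolding D3_def \<mu>_def
    by (rule le_mult_if_le_affine) simp_all
  with u grad \<open>1 \<le> t\<close> have "L2norm \<Omega> (PiD I U u) \<le> sqrt D2 * t"
    and "L2norm \<Omega> (PiD I U (\<beta> \<circ> u)) \<le> sqrt D3 * t"
    and "L2norm \<Omega> (Grad (\<zeta> \<circ> u)) \<le> sqrt D1 * t"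
    by (auto intro!: le_sqrt_mult_if_sq_le L2norm_nonneg)
  then show ?thesis
    unfolding t_def[symmetric] GS_estimate_constant_def Let_def D3_def D2_def D1_def \<mu>_def
    by (simp add: distrib_right)
qed

theorem mainTheorem1:
  fixes \<Omega> :: "(real^'n) set"
    and M0 M1 K0 K1 lam_lo lam_hi Cbar :: real
  assumes "open \<Omega>" and "bounded \<Omega>" and "connected \<Omega>"
    and "M0 > 0" and "M1 > 0" and "K0 > 0" and "K1 > 0"
    and "lam_lo > 0" and "lam_hi \<ge> lam_lo"
  shows "\<exists>C>0. \<forall>(\<zeta>::real \<Rightarrow> real) (\<beta>::real \<Rightarrow> real) (\<Lambda>::real^'n \<Rightarrow> real^'n^'n)
            (f::real^'n \<Rightarrow> real) (F::real^'n \<Rightarrow> real^'n)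
            (I::nat set) (Ib::nat set) (U::nat \<Rightarrow> (real^'n) set)
            (Grad::(nat \<Rightarrow> real) \<Rightarrow> real^'n \<Rightarrow> real^'n)
            (Q::(real^'n \<Rightarrow> real) \<Rightarrow> (real^'n \<Rightarrow> real)) (u::nat \<Rightarrow> real).
     continuous_on UNIV \<zeta> \<and> mono \<zeta> \<and> \<zeta> 0 = 0 \<and> (\<forall>s. \<bar>\<zeta> s\<bar> \<ge> M0 * \<bar>s\<bar> - M1)
   \<and> continuous_on UNIV \<beta> \<and> mono \<beta> \<and> \<beta> 0 = 0 \<and> (\<forall>s. \<bar>\<beta> s\<bar> \<le> K0 * \<bar>s\<bar> + K1)
   \<and> strict_mono (\<lambda>s. \<beta> s + \<zeta> s)
   \<and> \<Lambda> \<in> borel_measurable (lebesgue_on \<Omega>)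
   \<and> (AE x in lebesgue_on \<Omega>. transpose (\<Lambda> x) = \<Lambda> x
        \<and> (\<forall>c::real. (\<exists>v::real^'n. v \<noteq> 0 \<and> \<Lambda> x *v v = c *\<^sub>R v) \<longrightarrow> lam_lo \<le> c \<and> c \<le> lam_hi))
   \<and> L2 \<Omega> f \<and> L2 \<Omega> F
   \<and> is_GD_pc \<Omega> I Ib U Grad Q
   \<and> CD \<Omega> I Ib U Grad \<le> Cbar
   \<and> solves_GS \<Omega> I Ib U Grad Q \<beta> \<zeta> \<Lambda> f F u
   \<longrightarrow> L2norm \<Omega> (PiD I U u) + L2norm \<Omega> (PiD I U (\<beta> \<circ> u)) + L2norm \<Omega> (Grad (\<zeta> \<circ> u))
       \<le> C * (L2norm \<Omega> (Q f) + L2norm \<Omega> F + 1)"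
proof -
  have fm: "finite_measure (lebesgue_on \<Omega>)"
    using assms(1,2) by (simp add: finite_measure_lebesgue_on lmeasurable_open)
  define C where "C = GS_estimate_constant (measure (lebesgue_on \<Omega>) \<Omega>) Cbar lam_lo M0 M1 K0 K1"
  show ?thesis
  proof (intro exI[of _ C] conjI allI impI)
    show "0 < C" unfolding C_def using assms(8) by (simp add: GS_estimate_constant_pos)
  qed (elim conjE, unfold C_def, rule GS_a_priori_estimate[OF fm assms(8) assms(4)])
qed

end
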